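(* Let $D$ be any derivation of $\mathfrak{g}_1\underline{\times}\mathfrak{g}_2$, and write $D_{ij}=p_iDp_j$. Then: (1) for $i=1,2$, the restriction of $D_{ii}$ to $\mathfrak{g}_i$ is a derivation of $\mathfrak{g}_i$; (2) $D_{21}(C^1\mathfrak{g}_1)=D_{12}(C^1\mathfrak{g}_2)=0$; (3) $D_{i3}(\mathfrak{g}_3)\subset Z(\mathfrak{g}_i)$ for $i=1,2$; (4) $D_{12}(\mathfrak{g}_2)\subset T_1$ and $D_{21}(\mathfrak{g}_1)\subset T_2$, where $T_i=\{Y\in\mathfrak{g}_i : [Y,\mathfrak{g}_i]\subset Z(\mathfrak{g}_i)\}$ for $i=1,2$.
   Context: All Lie algebras are finite-dimensional, complex, nilpotent and nonabelian. $C^1\mathfrak{g}=[\mathfrak{g},\mathfrak{g}]$; $Z(\mathfrak{g})$ is the center. Product by generators: for $\mathfrak{g}_1,\mathfrak{g}_2$ of dimensions $m_1,m_2$ take bases $\{X_1,\dots,X_{m_1}\}$, $\{X'_1,\dots,X'_{m_2}\}$ such that $X_1,\dots,X_{n_1}$ generate $\mathfrak{g}_1$ and $X_{n_1+1},\dots,X_{m_1}$ span $C^1\mathfrak{g}_1$, and similarly for $\mathfrak{g}_2$ with $n_2$ generators. $\mathfrak{g}_1\underline{\times}\mathfrak{g}_2$ is the Lie algebra on $\mathfrak{g}_1\oplus\mathfrak{g}_2\oplus\mathfrak{g}_3$, $\mathfrak{g}_3=\langle Z_1,\dots,Z_{n_1n_2}\rangle$, with the brackets of $\mathfrak{g}_1$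 and of $\mathfrak{g}_2$, $[X_i,X'_j]=Z_{(i-1)n_2+j}$ for $i\le n_1$, $j\le n_2$, $[X_i,X'_j]=0$ otherwise, and $\mathfrak{g}_3$ central. $p_i$ ($i=1,2,3$) is the projection of $\mathfrak{g}_1\oplus\mathfrak{g}_2\oplus\mathfrak{g}_3$ onto $\mathfrak{g}_i$. *)

theory Defs
  imports Complex_Main
begin

text \<open>A complex Lie algebra of dimension m is represented on the
carrier vec m = vectors nat => complex supported on {0..<m}; the standard basis
vector e i (i < m) plays the role of the basis element X_(i+1).\<close>

type_synonym cvec = "nat \<Rightarrow> complex"
type_synonym bracket = "cvec \<Rightarrow> cvec \<Rightarrow> cvec"

definition vzero :: cvec where "vzero = (\<lambda>_. 0)"
definition vadd :: "cvec \<Rightarrow> cvec \<Rightarrow> cvec" where "vadd x y = (\<lambda>i. x i + y i)"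
definition scal :: "complex \<Rightarrow> cvec \<Rightarrow> cvec" where "scal c x = (\<lambda>i. c * x i)"
definition ebas :: "nat \<Rightarrow> cvec" where "ebas j = (\<lambda>i. if i = j then 1 else 0)"

definition vec :: "nat \<Rightarrow> cvec set" where "vec m = {x. \<forall>i\<ge>m. x i = 0}"

inductive_set cspan :: "cvec set \<Rightarrow> cvec set" for S where
  cspan_zero: "vzero \<in> cspan S"
| cspan_step: "s \<in> S \<Longrightarrow> v \<in> cspan S \<Longrightarrow> vadd (scal c s) v \<in> cspan S"

definition lie_alg :: "nat \<Rightarrow> bracket \<Rightarrow> bool" where
  "lie_alg m br \<longleftrightarrow>
     (\<forall>x\<in>vec m. \<forall>y\<in>vec m. br x y \<in> vec m) \<and>
     (\<forall>x\<in>vec m. \<forall>y\<in>vec m. \<forall>z\<in>vec m. br (vadd x y) z = vadd (br x z) (br y z)) \<and>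
     (\<forall>x\<in>vec m. \<forall>y\<in>vec m. \<forall>z\<in>vec m. br z (vadd x y) = vadd (br z x) (br z y)) \<and>
     (\<forall>c x y. x \<in> vec m \<longrightarrow> y \<in> vec m \<longrightarrow> br (scal c x) y = scal c (br x y)) \<and>
     (\<forall>c x y. x \<in> vec m \<longrightarrow> y \<in> vec m \<longrightarrow> br y (scal c x) = scal c (br y x)) \<and>
     (\<forall>x\<in>vec m. br x x = vzero) \<and>
     (\<forall>x\<in>vec m. \<forall>y\<in>vec m. \<forall>z\<in>vec m.
        vadd (br x (br y z)) (vadd (br y (br z x)) (br z (br x y))) = vzero)"

definition derived :: "nat \<Rightarrow> bracket \<Rightarrow> cvec set" where
  "derived m br = cspan {br x y | x y. x \<in> vec m \<and> y \<in> vec m}"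

fun lcs :: "nat \<Rightarrow> bracket \<Rightarrow> nat \<Rightarrow> cvec set" where
  "lcs m br 0 = vec m"
| "lcs m br (Suc k) = cspan {br x y | x y. x \<in> vec m \<and> y \<in> lcs m br k}"

definition center :: "nat \<Rightarrow> bracket \<Rightarrow> cvec set" where
  "center m br = {x \<in> vec m. \<forall>y\<in>vec m. br x y = vzero}"

definition nilpotent_lie :: "nat \<Rightarrow> bracket \<Rightarrow> bool" where
  "nilpotent_lie m br \<longleftrightarrow> lie_alg m br \<and> (\<exists>k. lcs m br k = {vzero})"

definition nonabelian :: "nat \<Rightarrow> bracket \<Rightarrow> bool" where
  "nonabelian m br \<longleftrightarrow> (\<exists>x\<in>vec m. \<exists>y\<in>vec m. br x y \<noteq> vzero)"

inductive_set gen_sub :: "bracket \<Rightarrow> cvec set \<Rightarrow> cvec set" for br S where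
  gen_base: "s \<in> S \<Longrightarrow> s \<in> gen_sub br S"
| gen_zero: "vzero \<in> gen_sub br S"
| gen_add: "x \<in> gen_sub br S \<Longrightarrow> y \<in> gen_sub br S \<Longrightarrow> vadd x y \<in> gen_sub br S"
| gen_scal: "x \<in> gen_sub br S \<Longrightarrow> scal c x \<in> gen_sub br S"
| gen_br: "x \<in> gen_sub br S \<Longrightarrow> y \<in> gen_sub br S \<Longrightarrow> br x y \<in> gen_sub br S"

definition adapted :: "nat \<Rightarrow> bracket \<Rightarrow> nat \<Rightarrow> bool" where
  "adapted m br n \<longleftrightarrow> n \<le> m \<and>
     gen_sub br (ebas ` {..<n}) = vec m \<and>
     cspan (ebas ` {n..<m}) = derived m br"

definition lie_der :: "nat \<Rightarrow> bracket \<Rightarrow> (cvec \<Rightarrow> cvec) \<Rightarrow> bool" where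
  "lie_der m br D \<longleftrightarrow>
     (\<forall>x\<in>vec m. D x \<in> vec m) \<and>
     (\<forall>x\<in>vec m. \<forall>y\<in>vec m. D (vadd x y) = vadd (D x) (D y)) \<and>
     (\<forall>c x. x \<in> vec m \<longrightarrow> D (scal c x) = scal c (D x)) \<and>
     (\<forall>x\<in>vec m. \<forall>y\<in>vec m. D (br x y) = vadd (br (D x) y) (br x (D y)))"

text \<open>Product by generators g1 x_ g2 on vec (m1 + m2 + n1*n2): coordinates 0..<m1 are g1,
m1..<m1+m2 are g2 (X'_(j+1) = e_(m1+j)), and m1+m2+k are g3 (Z_(k+1)).
[X_i, X'_j] = Z_((i-1) n2 + j) (1-based) becomes index i*n2+j (0-based).\<close>

definition emb1 :: "nat \<Rightarrow> cvec \<Rightarrow> cvec" where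
  "emb1 m1 y = (\<lambda>k. if k < m1 then y k else 0)"
definition res1 :: "nat \<Rightarrow> cvec \<Rightarrow> cvec" where
  "res1 m1 x = (\<lambda>k. if k < m1 then x k else 0)"
definition emb2 :: "nat \<Rightarrow> nat \<Rightarrow> cvec \<Rightarrow> cvec" where
  "emb2 m1 m2 y = (\<lambda>k. if m1 \<le> k \<and> k < m1 + m2 then y (k - m1) else 0)"
definition res2 :: "nat \<Rightarrow> nat \<Rightarrow> cvec \<Rightarrow> cvec" where
  "res2 m1 m2 x = (\<lambda>k. if k < m2 then x (m1 + k) else 0)"

definition prod_gen :: "nat \<Rightarrow> nat \<Rightarrow> bracket \<Rightarrow> nat \<Rightarrow> nat \<Rightarrow> bracket \<Rightarrow> bracket" where
  "prod_gen m1 n1 br1 m2 n2 br2 x y =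
     vadd (emb1 m1 (br1 (res1 m1 x) (res1 m1 y)))
      (vadd (emb2 m1 m2 (br2 (res2 m1 m2 x) (res2 m1 m2 y)))
        (\<lambda>k. if m1 + m2 \<le> k \<and> k < m1 + m2 + n1 * n2 then
               (let t = k - (m1 + m2); i = t div n2; j = t mod n2 in
                  x i * y (m1 + j) - y i * x (m1 + j))
             else 0))"

definition proj1 :: "nat \<Rightarrow> cvec \<Rightarrow> cvec" where
  "proj1 m1 x = (\<lambda>k. if k < m1 then x k else 0)"
definition proj2 :: "nat \<Rightarrow> nat \<Rightarrow> cvec \<Rightarrow> cvec" where
  "proj2 m1 m2 x = (\<lambda>k. if m1 \<le> k \<and> k < m1 + m2 then x k else 0)"
definition proj3 :: "nat \<Rightarrow> nat \<Rightarrow> nat \<Rightarrow> cvec \<Rightarrow> cvec" where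
  "proj3 m1 m2 N x = (\<lambda>k. if m1 + m2 \<le> k \<and> k < N then x k else 0)"

definition Tset :: "nat \<Rightarrow> bracket \<Rightarrow> cvec set" where
  "Tset m br = {y \<in> vec m. \<forall>x\<in>vec m. br y x \<in> center m br}"

end

theory Submission
  imports Defs
begin

(* Let L be the product, f one of the projections p_1, p_2 and e the inclusion of the
   corresponding factor g. Then f is a Lie homomorphism L -> g with the homomorphic section e,
   and g_3 is central in L. Everything follows from this for the compression f o D o e' of
   a derivation D of L: it is a derivation of g when e' = e; when f o e' = 0 it kills every
   bracket [a, b], because D [e' a, e' b] = [D e' a, e' b] + [e' a, D e' b] and f kills e' a,
   e' b; D and f map central elements to central ones; and if [W, e x] is central and f W = 0,
   then [f (D W), x] = f (D [W, e x]) is central. *)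

lemma vadd_vzero [simp]: "vadd x vzero = x" "vadd vzero x = x"
  by (simp_all add: vadd_def vzero_def)

lemma scal_vzero [simp]: "scal c vzero = vzero"
  by (simp add: scal_def vzero_def)

lemma scal_zero [simp]: "scal 0 x = vzero"
  by (simp add: scal_def vzero_def)

lemma vzero_in_vec [simp]: "vzero \<in> vec m"
  by (simp add: vec_def vzero_def)

lemma vadd_in_vec: "x \<in> vec m \<Longrightarrow> y \<in> vec m \<Longrightarrow> vadd x y \<in> vec m"
  by (simp add: vadd_def vec_def)

lemma scal_in_vec: "x \<in> vec m \<Longrightarrow> scal c x \<in> vec m"
  by (simp add: scal_def vec_def)

lemma cspan_subset_vec:
  assumes "S \<subseteq> vec m"
  shows "cspan S \<subseteq> vec m"
proof
  fix x assume "x \<in> cspan S"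
  then show "x \<in> vec m"
    by induction (use assms in \<open>auto intro: vadd_in_vec scal_in_vec\<close>)
qed

lemma lie_alg_bracket_closed: "lie_alg m br \<Longrightarrow> x \<in> vec m \<Longrightarrow> y \<in> vec m \<Longrightarrow> br x y \<in> vec m"
  unfolding lie_alg_def by blast

lemma lie_alg_scal_left:
  "lie_alg m br \<Longrightarrow> x \<in> vec m \<Longrightarrow> y \<in> vec m \<Longrightarrow> br (scal c x) y = scal c (br x y)"
  by (simp add: lie_alg_def)

lemma lie_alg_scal_right:
  "lie_alg m br \<Longrightarrow> x \<in> vec m \<Longrightarrow> y \<in> vec m \<Longrightarrow> br y (scal c x) = scal c (br y x)"
  by (simp add: lie_alg_def)

lemma lie_alg_bracket_zero_left: "lie_alg m br \<Longrightarrow> y \<in> vec m \<Longrightarrow> br vzero y = vzero"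
  using lie_alg_scal_left[of m br vzero y 0] by simp

lemma lie_alg_bracket_zero_right: "lie_alg m br \<Longrightarrow> y \<in> vec m \<Longrightarrow> br y vzero = vzero"
  using lie_alg_scal_right[of m br vzero y 0] by simp

section \<open>Compressing a derivation along a Lie homomorphism\<close>

definition linear_on :: "nat \<Rightarrow> nat \<Rightarrow> (cvec \<Rightarrow> cvec) \<Rightarrow> bool" where
  "linear_on m m' f \<longleftrightarrow>
     (\<forall>x\<in>vec m. f x \<in> vec m') \<and>
     (\<forall>x\<in>vec m. \<forall>y\<in>vec m. f (vadd x y) = vadd (f x) (f y)) \<and>
     (\<forall>c. \<forall>x\<in>vec m. f (scal c x) = scal c (f x))"

definition lie_hom :: "nat \<Rightarrow> bracket \<Rightarrow> nat \<Rightarrow> bracket \<Rightarrow> (cvec \<Rightarrow> cvec) \<Rightarrow> bool" where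
  "lie_hom m br m' br' f \<longleftrightarrow>
     linear_on m m' f \<and> (\<forall>x\<in>vec m. \<forall>y\<in>vec m. f (br x y) = br' (f x) (f y))"

lemma lie_der_iff_linear_on:
  "lie_der m br D \<longleftrightarrow>
     linear_on m m D \<and> (\<forall>x\<in>vec m. \<forall>y\<in>vec m. D (br x y) = vadd (br (D x) y) (br x (D y)))"
  by (auto simp: lie_der_def linear_on_def)

lemma linear_on_zero: "linear_on m m' f \<Longrightarrow> f vzero = vzero"
  unfolding linear_on_def by (metis scal_zero vzero_in_vec)

lemma linear_on_comp: "linear_on m m' f \<Longrightarrow> linear_on m' m'' g \<Longrightarrow> linear_on m m'' (\<lambda>x. g (f x))"
  by (simp add: linear_on_def)

lemma linear_on_vanishes_on_cspan:
  assumes f: "linear_on m m' f" and S: "S \<subseteq> vec m" and vanish: "\<forall>s\<in>S. f s = vzero"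
    and x: "x \<in> cspan S"
  shows "f x = vzero"
  using x
proof induction
  case cspan_zero
  show ?case using linear_on_zero[OF f] .
next
  case (cspan_step s v c)
  have "s \<in> vec m" "v \<in> vec m"
    using cspan_step.hyps S cspan_subset_vec[OF S] by auto
  then show ?case
    using f vanish cspan_step by (simp add: linear_on_def scal_in_vec)
qed

lemma lie_der_center:
  assumes D: "lie_der m br D" and z: "z \<in> center m br"
  shows "D z \<in> center m br"
proof -
  have "br (D z) y = vzero" if y: "y \<in> vec m" for y
  proof -
    have zy: "z \<in> vec m" "br z (D y) = vzero"
      using z y D by (auto simp: center_def lie_der_def)
    have "br (D z) y = vadd (br (D z) y) (br z (D y))"
      using zy by simp
    also have "\<dots> = D (br z y)"
      using D y zy by (simp add: lie_der_def)
    also have "\<dots> = vzero"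
      using z y D linear_on_zero[of m m D] by (simp add: center_def lie_der_iff_linear_on)
    finally show ?thesis .
  qed
  moreover have "D z \<in> vec m"
    using D z by (simp add: lie_der_def center_def)
  ultimately show ?thesis
    by (simp add: center_def)
qed

lemma lie_hom_center:
  assumes f: "lie_hom m br m' br' f" and onto: "vec m' \<subseteq> f ` vec m" and z: "z \<in> center m br"
  shows "f z \<in> center m' br'"
proof -
  have "br' (f z) (f x) = vzero" if x: "x \<in> vec m" for x
  proof -
    have "z \<in> vec m"
      using z by (simp add: center_def)
    then have "br' (f z) (f x) = f (br z x)"
      using f x by (simp add: lie_hom_def)
    also have "\<dots> = vzero"
      using z x f linear_on_zero[of m m' f] by (simp add: center_def lie_hom_def)
    finally show ?thesis .
  qed
  then show ?thesis
    using f z onto by (auto simp: center_def lie_hom_def linear_on_def)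
qed

lemma lie_hom_section_onto:
  "lie_hom m br N P e \<Longrightarrow> \<forall>x\<in>vec m. f (e x) = x \<Longrightarrow> vec m \<subseteq> f ` vec N"
  by (force simp: lie_hom_def linear_on_def)

lemma lie_hom_der_bracket:
  assumes closed: "\<And>a b. a \<in> vec N \<Longrightarrow> b \<in> vec N \<Longrightarrow> P a b \<in> vec N"
    and f: "lie_hom N P m br f" and D: "lie_der N P D" and uv: "u \<in> vec N" "v \<in> vec N"
  shows "f (D (P u v)) = vadd (br (f (D u)) (f v)) (br (f u) (f (D v)))"
proof -
  have Duv: "D u \<in> vec N" "D v \<in> vec N"
    using D uv by (simp_all add: lie_der_def)
  have "f (D (P u v)) = f (vadd (P (D u) v) (P u (D v)))"
    using D uv by (simp add: lie_der_def)
  also have "\<dots> = vadd (br (f (D u)) (f v)) (br (f u) (f (D v)))"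
    using f uv Duv closed by (simp add: lie_hom_def linear_on_def)
  finally show ?thesis .
qed

lemma lie_der_compress:
  assumes closed: "\<And>a b. a \<in> vec N \<Longrightarrow> b \<in> vec N \<Longrightarrow> P a b \<in> vec N"
    and f: "lie_hom N P m br f" and e: "lie_hom m br N P e"
    and fe: "\<forall>x\<in>vec m. f (e x) = x" and D: "lie_der N P D"
  shows "lie_der m br (\<lambda>x. f (D (e x)))"
  unfolding lie_der_iff_linear_on
proof (intro conjI ballI)
  show "linear_on m m (\<lambda>x. f (D (e x)))"
    using e D f by (auto simp: lie_hom_def lie_der_iff_linear_on intro: linear_on_comp)
next
  fix x y assume xy: "x \<in> vec m" "y \<in> vec m"
  then have exy: "e x \<in> vec N" "e y \<in> vec N"
    using e by (simp_all add: lie_hom_def linear_on_def)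
  have "f (D (e (br x y))) = f (D (P (e x) (e y)))"
    using e xy by (simp add: lie_hom_def)
  also have "\<dots> = vadd (br (f (D (e x))) y) (br x (f (D (e y))))"
    using lie_hom_der_bracket[OF closed f D exy] fe xy by simp
  finally show "f (D (e (br x y))) = vadd (br (f (D (e x))) y) (br x (f (D (e y))))" .
qed

lemma lie_der_cross_vanishes_on_derived:
  assumes closed: "\<And>a b. a \<in> vec N \<Longrightarrow> b \<in> vec N \<Longrightarrow> P a b \<in> vec N"
    and g: "lie_alg m br" and h: "lie_alg m' br'"
    and e: "lie_hom m br N P e" and f: "lie_hom N P m' br' f"
    and fe: "\<forall>x\<in>vec m. f (e x) = vzero" and D: "lie_der N P D"
    and x: "x \<in> derived m br"
  shows "f (D (e x)) = vzero"
proof (rule linear_on_vanishes_on_cspan[where f = "\<lambda>x. f (D (e x))"])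
  show "linear_on m m' (\<lambda>x. f (D (e x)))"
    using e D f by (auto simp: lie_hom_def lie_der_iff_linear_on intro: linear_on_comp)
  show "{br a b | a b. a \<in> vec m \<and> b \<in> vec m} \<subseteq> vec m"
    using g lie_alg_bracket_closed by blast
  show "x \<in> cspan {br a b | a b. a \<in> vec m \<and> b \<in> vec m}"
    using x by (simp add: derived_def)
  have "f (D (e (br a b))) = vzero" if ab: "a \<in> vec m" "b \<in> vec m" for a b
  proof -
    have eab: "e a \<in> vec N" "e b \<in> vec N" "D (e a) \<in> vec N" "D (e b) \<in> vec N"
      using e D ab by (auto simp: lie_hom_def linear_on_def lie_der_def)
    have "f (D (e (br a b))) = f (D (P (e a) (e b)))"
      using e ab by (simp add: lie_hom_def)
    also have "\<dots> = vadd (br' (f (D (e a))) vzero) (br' vzero (f (D (e b))))"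
      using lie_hom_der_bracket[OF closed f D eab(1,2)] fe ab by simp
    also have "\<dots> = vzero"
      using f eab h lie_alg_bracket_zero_left lie_alg_bracket_zero_right
      by (simp add: lie_hom_def linear_on_def)
    finally show ?thesis .
  qed
  then show "\<forall>s\<in>{br a b | a b. a \<in> vec m \<and> b \<in> vec m}. f (D (e s)) = vzero"
    by blast
qed

lemma lie_der_cross_in_Tset:
  assumes closed: "\<And>a b. a \<in> vec N \<Longrightarrow> b \<in> vec N \<Longrightarrow> P a b \<in> vec N"
    and g: "lie_alg m br" and f: "lie_hom N P m br f" and e: "lie_hom m br N P e"
    and fe: "\<forall>x\<in>vec m. f (e x) = x" and D: "lie_der N P D"
    and W: "W \<in> vec N" "f W = vzero" and central: "\<forall>x\<in>vec m. P W (e x) \<in> center N P"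
  shows "f (D W) \<in> Tset m br"
proof -
  have onto: "vec m \<subseteq> f ` vec N"
    using lie_hom_section_onto[OF e fe] .
  have DW: "f (D W) \<in> vec m"
    using D W f by (simp add: lie_der_def lie_hom_def linear_on_def)
  have "br (f (D W)) x \<in> center m br" if x: "x \<in> vec m" for x
  proof -
    have ex: "e x \<in> vec N" "D (e x) \<in> vec N"
      using e D x by (auto simp: lie_hom_def linear_on_def lie_der_def)
    have "br (f (D W)) x = vadd (br (f (D W)) x) (br vzero (f (D (e x))))"
      using f ex g lie_alg_bracket_zero_left by (simp add: lie_hom_def linear_on_def)
    also have "\<dots> = f (D (P W (e x)))"
      using lie_hom_der_bracket[OF closed f D W(1) ex(1)] fe x W(2) by simp
    also have "\<dots> \<in> center m br"
      using central x lie_der_center[OF D] lie_hom_center[OF f onto] by blast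
    finally show ?thesis .
  qed
  then show ?thesis
    using DW by (simp add: Tset_def)
qed

section \<open>The product by generators\<close>

lemma res1_in_vec [simp]: "res1 m1 x \<in> vec m1"
  by (simp add: res1_def vec_def)

lemma res2_in_vec [simp]: "res2 m1 m2 x \<in> vec m2"
  by (simp add: res2_def vec_def)

lemma emb1_in_vec: "m1 \<le> N \<Longrightarrow> emb1 m1 x \<in> vec N"
  by (simp add: emb1_def vec_def)

lemma emb2_in_vec: "m1 + m2 \<le> N \<Longrightarrow> emb2 m1 m2 x \<in> vec N"
  by (simp add: emb2_def vec_def)

lemma proj3_in_vec: "proj3 m1 m2 N x \<in> vec N"
  by (simp add: proj3_def vec_def)

lemma prod_gen_in_vec: "prod_gen m1 n1 br1 m2 n2 br2 u v \<in> vec (m1 + m2 + n1 * n2)"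
  by (simp add: prod_gen_def vec_def vadd_def emb1_def emb2_def)

lemma res1_emb1 [simp]: "x \<in> vec m1 \<Longrightarrow> res1 m1 (emb1 m1 x) = x"
  by (rule ext) (simp add: res1_def emb1_def vec_def)

lemma res2_emb2 [simp]: "x \<in> vec m2 \<Longrightarrow> res2 m1 m2 (emb2 m1 m2 x) = x"
  by (rule ext) (simp add: res2_def emb2_def vec_def)

lemma res1_emb2 [simp]: "res1 m1 (emb2 m1 m2 x) = vzero"
  by (rule ext) (simp add: res1_def emb2_def vzero_def)

lemma res2_emb1 [simp]: "res2 m1 m2 (emb1 m1 x) = vzero"
  by (rule ext) (simp add: res2_def emb1_def vzero_def)

lemma res1_proj3 [simp]: "res1 m1 (proj3 m1 m2 N z) = vzero"
  by (rule ext) (simp add: res1_def proj3_def vzero_def)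

lemma res2_proj3 [simp]: "res2 m1 m2 (proj3 m1 m2 N z) = vzero"
  by (rule ext) (simp add: res2_def proj3_def vzero_def)

lemma res1_proj1 [simp]: "res1 m1 (proj1 m1 x) = res1 m1 x"
  by (rule ext) (simp add: res1_def proj1_def)

lemma res2_proj2 [simp]: "res2 m1 m2 (proj2 m1 m2 x) = res2 m1 m2 x"
  by (rule ext) (simp add: res2_def proj2_def)

lemma proj1_emb1 [simp]: "proj1 m1 (emb1 m1 x) = emb1 m1 x"
  by (rule ext) (simp add: proj1_def emb1_def)

lemma proj2_emb2 [simp]: "proj2 m1 m2 (emb2 m1 m2 x) = emb2 m1 m2 x"
  by (rule ext) (simp add: proj2_def emb2_def)

lemma proj1_eq_vzero_iff: "proj1 m1 x = vzero \<longleftrightarrow> res1 m1 x = vzero"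
  by (simp add: fun_eq_iff proj1_def res1_def vzero_def)

lemma proj2_eq_vzero_iff: "proj2 m1 m2 x = vzero \<longleftrightarrow> res2 m1 m2 x = vzero"
  by (auto simp: fun_eq_iff proj2_def res2_def vzero_def)
      (metis add.commute le_add2 le_add_diff_inverse nat_add_left_cancel_less)

lemma res1_prod_gen:
  assumes "lie_alg m1 br1"
  shows "res1 m1 (prod_gen m1 n1 br1 m2 n2 br2 u v) = br1 (res1 m1 u) (res1 m1 v)"
proof -
  have "br1 (res1 m1 u) (res1 m1 v) \<in> vec m1"
    using assms by (simp add: lie_alg_bracket_closed)
  then show ?thesis
    by (auto simp: fun_eq_iff res1_def prod_gen_def vadd_def emb1_def emb2_def vec_def)
qed

lemma res2_prod_gen:
  assumes "lie_alg m2 br2"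
  shows "res2 m1 m2 (prod_gen m1 n1 br1 m2 n2 br2 u v) = br2 (res2 m1 m2 u) (res2 m1 m2 v)"
proof -
  have "br2 (res2 m1 m2 u) (res2 m1 m2 v) \<in> vec m2"
    using assms by (simp add: lie_alg_bracket_closed)
  then show ?thesis
    by (auto simp: fun_eq_iff res2_def prod_gen_def vadd_def emb1_def emb2_def vec_def)
qed

lemma emb1_beyond: "m1 \<le> k \<Longrightarrow> emb1 m1 x k = 0"
  by (simp add: emb1_def)

lemma emb2_below: "k < m1 \<Longrightarrow> emb2 m1 m2 x k = 0"
  by (simp add: emb2_def)

lemma prod_gen_index_bounds:
  fixes k m1 m2 n1 n2 :: nat
  assumes "m1 + m2 \<le> k" "k < m1 + m2 + n1 * n2"
  shows "(k - (m1 + m2)) div n2 < n1" "(k - (m1 + m2)) mod n2 < n2"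
proof -
  have t: "k - (m1 + m2) < n1 * n2"
    using assms by linarith
  then have "n2 > 0"
    by (cases n2) auto
  with t show "(k - (m1 + m2)) div n2 < n1" "(k - (m1 + m2)) mod n2 < n2"
    by (simp_all add: less_mult_imp_div_less)
qed

lemma prod_gen_emb1:
  assumes g2: "lie_alg m2 br2" and ab: "a \<in> vec m1" "b \<in> vec m1"
  shows "prod_gen m1 n1 br1 m2 n2 br2 (emb1 m1 a) (emb1 m1 b) = emb1 m1 (br1 a b)"
proof -
  have "br2 vzero vzero = vzero"
    using g2 by (simp add: lie_alg_bracket_zero_left)
  then show ?thesis
    unfolding prod_gen_def res1_emb1[OF ab(1)] res1_emb1[OF ab(2)] res2_emb1
    by (simp add: fun_eq_iff vadd_def Let_def emb1_beyond emb2_def vzero_def)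
qed

lemma prod_gen_emb2:
  assumes g1: "lie_alg m1 br1" and ab: "a \<in> vec m2" "b \<in> vec m2" and n1: "n1 \<le> m1"
  shows "prod_gen m1 n1 br1 m2 n2 br2 (emb2 m1 m2 a) (emb2 m1 m2 b) = emb2 m1 m2 (br2 a b)"
proof -
  have "br1 vzero vzero = vzero"
    using g1 by (simp add: lie_alg_bracket_zero_left)
  moreover have "emb2 m1 m2 x ((k - (m1 + m2)) div n2) = 0"
    if "m1 + m2 \<le> k" "k < m1 + m2 + n1 * n2" for k x
    using prod_gen_index_bounds[OF that] n1 by (simp add: emb2_below)
  ultimately show ?thesis
    unfolding prod_gen_def res2_emb2[OF ab(1)] res2_emb2[OF ab(2)] res1_emb2
    by (simp add: fun_eq_iff vadd_def Let_def, simp add: vzero_def emb1_def)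
qed

lemma lie_hom_res1_prod_gen:
  "lie_alg m1 br1 \<Longrightarrow> lie_hom (m1 + m2 + n1 * n2) (prod_gen m1 n1 br1 m2 n2 br2) m1 br1 (res1 m1)"
  by (simp add: lie_hom_def linear_on_def res1_prod_gen) (simp add: fun_eq_iff res1_def vadd_def scal_def)

lemma lie_hom_res2_prod_gen:
  "lie_alg m2 br2 \<Longrightarrow> lie_hom (m1 + m2 + n1 * n2) (prod_gen m1 n1 br1 m2 n2 br2) m2 br2 (res2 m1 m2)"
  by (simp add: lie_hom_def linear_on_def res2_prod_gen) (simp add: fun_eq_iff res2_def vadd_def scal_def)

lemma lie_hom_emb1_prod_gen:
  "lie_alg m2 br2 \<Longrightarrow> lie_hom m1 br1 (m1 + m2 + n1 * n2) (prod_gen m1 n1 br1 m2 n2 br2) (emb1 m1)"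
  by (simp add: lie_hom_def linear_on_def prod_gen_emb1 emb1_in_vec)
    (simp add: fun_eq_iff emb1_def vadd_def scal_def)

lemma lie_hom_emb2_prod_gen:
  "lie_alg m1 br1 \<Longrightarrow> n1 \<le> m1 \<Longrightarrow>
     lie_hom m2 br2 (m1 + m2 + n1 * n2) (prod_gen m1 n1 br1 m2 n2 br2) (emb2 m1 m2)"
  by (simp add: lie_hom_def linear_on_def prod_gen_emb2 emb2_in_vec)
    (simp add: fun_eq_iff emb2_def vadd_def scal_def)

lemma prod_gen_center:
  assumes g1: "lie_alg m1 br1" and g2: "lie_alg m2 br2" and n: "n1 \<le> m1" "n2 \<le> m2"
    and u: "u \<in> vec (m1 + m2 + n1 * n2)" "res1 m1 u = vzero" "res2 m1 m2 u = vzero"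
  shows "u \<in> center (m1 + m2 + n1 * n2) (prod_gen m1 n1 br1 m2 n2 br2)"
proof -
  have u1: "u i = 0" if "i < n1" for i
    using fun_cong[OF u(2), of i] that n by (simp add: res1_def vzero_def)
  have u2: "u (m1 + j) = 0" if "j < n2" for j
    using fun_cong[OF u(3), of j] that n by (simp add: res2_def vzero_def)
  have cross: "u ((k - (m1 + m2)) div n2) = 0 \<and> u (m1 + (k - (m1 + m2)) mod n2) = 0"
    if "m1 + m2 \<le> k" "k < m1 + m2 + n1 * n2" for k
    using prod_gen_index_bounds[OF that] u1 u2 by simp
  have "prod_gen m1 n1 br1 m2 n2 br2 u v = vzero" for v
  proof -
    have "br1 vzero (res1 m1 v) = vzero" "br2 vzero (res2 m1 m2 v) = vzero"
      using g1 g2 by (simp_all add: lie_alg_bracket_zero_left)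
    then show ?thesis
      unfolding prod_gen_def u(2,3)
      by (simp add: fun_eq_iff vadd_def Let_def cross)
        (simp add: vzero_def emb1_def emb2_def)
  qed
  then show ?thesis
    using u(1) by (simp add: center_def)
qed

lemma prod_gen_cross_center:
  assumes g1: "lie_alg m1 br1" and g2: "lie_alg m2 br2" and n: "n1 \<le> m1" "n2 \<le> m2"
    and x: "x \<in> vec m1" and y: "y \<in> vec m2"
  shows "prod_gen m1 n1 br1 m2 n2 br2 (emb1 m1 x) (emb2 m1 m2 y)
           \<in> center (m1 + m2 + n1 * n2) (prod_gen m1 n1 br1 m2 n2 br2)"
    and "prod_gen m1 n1 br1 m2 n2 br2 (emb2 m1 m2 y) (emb1 m1 x)
           \<in> center (m1 + m2 + n1 * n2) (prod_gen m1 n1 br1 m2 n2 br2)"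
  using prod_gen_center[OF g1 g2 n prod_gen_in_vec] x y
  by (simp_all add: res1_prod_gen[OF g1] res2_prod_gen[OF g2]
      lie_alg_bracket_zero_left[OF g1] lie_alg_bracket_zero_right[OF g1]
      lie_alg_bracket_zero_left[OF g2] lie_alg_bracket_zero_right[OF g2])

section \<open>The blocks of a derivation of the product\<close>

locale prod_gen_der =
  fixes m1 n1 :: nat and br1 :: bracket and m2 n2 :: nat and br2 :: bracket
    and D :: "cvec \<Rightarrow> cvec"
  assumes lie1: "lie_alg m1 br1" and lie2: "lie_alg m2 br2"
    and n1_le: "n1 \<le> m1" and n2_le: "n2 \<le> m2"
    and der: "lie_der (m1 + m2 + n1 * n2) (prod_gen m1 n1 br1 m2 n2 br2) D"
begin

abbreviation dim :: nat where "dim \<equiv> m1 + m2 + n1 * n2"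

abbreviation prod_br :: bracket where "prod_br \<equiv> prod_gen m1 n1 br1 m2 n2 br2"

lemmas hom_res1 = lie_hom_res1_prod_gen[OF lie1, of m2 n1 n2 br2]
  and hom_res2 = lie_hom_res2_prod_gen[OF lie2, of m1 n1 n2 br1]
  and hom_emb1 = lie_hom_emb1_prod_gen[OF lie2, of m1 br1 n1 n2]
  and hom_emb2 = lie_hom_emb2_prod_gen[OF lie1 n1_le, of m2 br2 n2]

lemma section1: "\<forall>x\<in>vec m1. res1 m1 (emb1 m1 x) = x"
  and section2: "\<forall>x\<in>vec m2. res2 m1 m2 (emb2 m1 m2 x) = x"
  by simp_all

lemma lie_der_D11: "lie_der m1 br1 (\<lambda>x. res1 m1 (D (emb1 m1 x)))"
  by (rule lie_der_compress[OF prod_gen_in_vec hom_res1 hom_emb1 section1 der])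

lemma lie_der_D22: "lie_der m2 br2 (\<lambda>x. res2 m1 m2 (D (emb2 m1 m2 x)))"
  by (rule lie_der_compress[OF prod_gen_in_vec hom_res2 hom_emb2 section2 der])

lemma D21_vanishes_on_derived: "x \<in> derived m1 br1 \<Longrightarrow> res2 m1 m2 (D (emb1 m1 x)) = vzero"
  by (rule lie_der_cross_vanishes_on_derived[OF prod_gen_in_vec lie1 lie2 hom_emb1 hom_res2 _ der]) simp

lemma D12_vanishes_on_derived: "x \<in> derived m2 br2 \<Longrightarrow> res1 m1 (D (emb2 m1 m2 x)) = vzero"
  by (rule lie_der_cross_vanishes_on_derived[OF prod_gen_in_vec lie2 lie1 hom_emb2 hom_res1 _ der]) simp

lemma D_center_component1: "z \<in> center dim prod_br \<Longrightarrow> res1 m1 (D z) \<in> center m1 br1"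
  using lie_hom_center[OF hom_res1 lie_hom_section_onto[OF hom_emb1 section1]] lie_der_center[OF der]
  by blast

lemma D_center_component2: "z \<in> center dim prod_br \<Longrightarrow> res2 m1 m2 (D z) \<in> center m2 br2"
  using lie_hom_center[OF hom_res2 lie_hom_section_onto[OF hom_emb2 section2]] lie_der_center[OF der]
  by blast

lemma D12_in_Tset: "y \<in> vec m2 \<Longrightarrow> res1 m1 (D (emb2 m1 m2 y)) \<in> Tset m1 br1"
  by (rule lie_der_cross_in_Tset[OF prod_gen_in_vec lie1 hom_res1 hom_emb1 section1 der])
    (simp_all add: emb2_in_vec prod_gen_cross_center[OF lie1 lie2 n1_le n2_le])

lemma D21_in_Tset: "x \<in> vec m1 \<Longrightarrow> res2 m1 m2 (D (emb1 m1 x)) \<in> Tset m2 br2"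
  by (rule lie_der_cross_in_Tset[OF prod_gen_in_vec lie2 hom_res2 hom_emb2 section2 der])
    (simp_all add: emb1_in_vec prod_gen_cross_center[OF lie1 lie2 n1_le n2_le])

end

theorem mainTheorem9:
  fixes m1 n1 m2 n2 :: nat and br1 br2 :: bracket and D :: "cvec \<Rightarrow> cvec"
  assumes g1: "nilpotent_lie m1 br1" "nonabelian m1 br1" "adapted m1 br1 n1"
      and g2: "nilpotent_lie m2 br2" "nonabelian m2 br2" "adapted m2 br2 n2"
      and D: "lie_der (m1 + m2 + n1 * n2) (prod_gen m1 n1 br1 m2 n2 br2) D"
  defines "N \<equiv> m1 + m2 + n1 * n2"
  shows
    "lie_der m1 br1 (\<lambda>y. res1 m1 (proj1 m1 (D (proj1 m1 (emb1 m1 y)))))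
     \<and> lie_der m2 br2 (\<lambda>y. res2 m1 m2 (proj2 m1 m2 (D (proj2 m1 m2 (emb2 m1 m2 y)))))
     \<and> (\<forall>x\<in>derived m1 br1. proj2 m1 m2 (D (proj1 m1 (emb1 m1 x))) = vzero)
     \<and> (\<forall>x\<in>derived m2 br2. proj1 m1 (D (proj2 m1 m2 (emb2 m1 m2 x))) = vzero)
     \<and> (\<forall>z\<in>vec N. res1 m1 (proj1 m1 (D (proj3 m1 m2 N z))) \<in> center m1 br1)
     \<and> (\<forall>z\<in>vec N. res2 m1 m2 (proj2 m1 m2 (D (proj3 m1 m2 N z))) \<in> center m2 br2)
     \<and> (\<forall>y\<in>vec m2. res1 m1 (proj1 m1 (D (proj2 m1 m2 (emb2 m1 m2 y)))) \<in> Tset m1 br1)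
     \<and> (\<forall>x\<in>vec m1. res2 m1 m2 (proj2 m1 m2 (D (proj1 m1 (emb1 m1 x)))) \<in> Tset m2 br2)"
proof -
  interpret prod_gen_der m1 n1 br1 m2 n2 br2 D
    using g1 g2 D by unfold_locales (simp_all add: nilpotent_lie_def adapted_def)
  have g3_central: "proj3 m1 m2 dim z \<in> center dim prod_br" for z
    by (simp add: prod_gen_center[OF lie1 lie2 n1_le n2_le] proj3_in_vec)
  show ?thesis
    unfolding N_def
    by (simp add: proj1_eq_vzero_iff proj2_eq_vzero_iff lie_der_D11 lie_der_D22
        D21_vanishes_on_derived D12_vanishes_on_derived D12_in_Tset D21_in_Tset
        D_center_component1[OF g3_central] D_center_component2[OF g3_central])
qed

end
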